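(* Let $\mathcal{F}=\{z\in\Omega:|z|=|z|_i\ge1\}$. For $z\in\mathcal{F}\cap k_{\infty^2}$, one has $\overline{\lambda}(z)=v_n$ if and only if $n=\log_q|z|$.
   Context: $q$ odd prime power, $A=\mathbb{F}_q[T]$, $k_\infty=\mathbb{F}_q((T^{-1}))$, $|T|=q$, $k_{\infty^2}=\mathbb{F}_{q^2}((T^{-1}))$, $\Omega=\mathbb{C}_\infty\smallsetminus k_\infty$, $|z|_i=\min_{w\in k_\infty}|z-w|$, $\Gamma=\mathrm{PGL}_2(A)$. Fix $\boldsymbol{\mathrm i}\in\mathbb{F}_{q^2}$ with $\boldsymbol{\mathrm i}^2\in\mathbb{F}_q^\times\smallsetminus(\mathbb{F}_q^\times)^2$; every $z\in k_{\infty^2}\smallsetminus k_\infty$ is $g\cdot\boldsymbol{\mathrm i}$ for some $g\in\mathrm{GL}_2(k_\infty)$ acting by Möbius transformations. Let $\mathcal{T}$ be the Bruhat–Tits tree of $\mathrm{PGL}_2(k_\infty)$ (vertices: homothety classes of $\mathcal{O}_\infty$-lattices in $k_\infty^2$). The vertex set of $\Gamma\backslash\mathcal{T}$ is $\{v_0,v_1,\dots\}$, $v_n$ the $\Gamma$-orbit of the class of $T^n\mathcal{O}_\infty\oplus\mathcal{O}_\infty$. For such $z=g\cdot\boldsymbol{\mathrm i}$, $\overline{\lambda}(z)$ is the $\Gamma$-orbit of the vertex $g\cdot[\mathcal{O}_\infty\oplus\mathcal{O}_\infty]$ (well defined since the stabilizer of $\boldsymbol{\mathrm i}$ lies in $\mathrm{PGL}_2(\mathcal{O}_\infty)$).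 *)

theory Defs
  imports "HOL-Computational_Algebra.Formal_Laurent_Series"
begin

text \<open>The type 'b is the finite field F_{q^2} (CARD('b) = q^2).
  Laurent series 'b fls in the variable X = T^{-1} model k_{infinity^2} = F_{q^2}((1/T)).\<close>

definition Fq :: "nat \<Rightarrow> 'b::field set" where
  "Fq q = {x. x ^ q = x}"

definition kinf :: "nat \<Rightarrow> 'b::field fls set" where
  "kinf q = {f. \<forall>n. fls_nth f n \<in> Fq q}"

text \<open>A = F_q[T]: no positive powers of X = 1/T.\<close>
definition Apoly :: "nat \<Rightarrow> 'b::field fls set" where
  "Apoly q = {f \<in> kinf q. \<forall>n>0. fls_nth f n = 0}"

text \<open>O_infinity: no negative powers of X = 1/T.\<close>
definition Oinf :: "nat \<Rightarrow> 'b::field fls set" where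
  "Oinf q = {f \<in> kinf q. \<forall>n<0. fls_nth f n = 0}"

abbreviation TT :: "'b::field fls" where
  "TT \<equiv> fls_X_inv"

definition absv :: "nat \<Rightarrow> 'b::field fls \<Rightarrow> real" where
  "absv q z = (if z = 0 then 0 else real q powi (- fls_subdegree z))"

definition absi :: "nat \<Rightarrow> 'b::field fls \<Rightarrow> real" where
  "absi q z = Inf ((\<lambda>w. absv q (z - w)) ` kinf q)"

text \<open>2x2 matrices (a,b,c,d) = [[a,b],[c,d]] and vectors (x,y).\<close>
type_synonym 'f mat2 = "'f \<times> 'f \<times> 'f \<times> 'f"

fun det2 :: "('f::comm_ring) mat2 \<Rightarrow> 'f" where
  "det2 (a,b,c,d) = a*d - b*c"

definition GL2 :: "('f::comm_ring_1) set \<Rightarrow> 'f mat2 set" where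
  "GL2 R = {(a,b,c,d). a \<in> R \<and> b \<in> R \<and> c \<in> R \<and> d \<in> R \<and>
                (\<exists>e\<in>R. det2 (a,b,c,d) * e = 1)}"

fun mob :: "('f::field) mat2 \<Rightarrow> 'f \<Rightarrow> 'f" where
  "mob (a,b,c,d) z = (a*z + b) / (c*z + d)"

fun matvec :: "('f::comm_ring) mat2 \<Rightarrow> 'f \<times> 'f \<Rightarrow> 'f \<times> 'f" where
  "matvec (a,b,c,d) (x,y) = (a*x + b*y, c*x + d*y)"

definition lattice :: "nat \<Rightarrow> ('b::field fls \<times> 'b fls) set \<Rightarrow> bool" where
  "lattice q L \<longleftrightarrow> (\<exists>h\<in>GL2 (kinf q). L = matvec h ` (Oinf q \<times> Oinf q))"

text \<open>Homothety class of a lattice = vertex of the Bruhat-Tits tree.\<close>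
definition homcls :: "nat \<Rightarrow> ('b::field fls \<times> 'b fls) set \<Rightarrow> ('b fls \<times> 'b fls) set set" where
  "homcls q L = {(\<lambda>(x,y). (c*x, c*y)) ` L | c. c \<in> kinf q \<and> c \<noteq> 0}"

definition vact :: "('b::field) fls mat2 \<Rightarrow> ('b fls \<times> 'b fls) set set \<Rightarrow> ('b fls \<times> 'b fls) set set" where
  "vact g V = (\<lambda>L. matvec g ` L) ` V"

text \<open>Gamma-orbit of a vertex, Gamma = PGL2(A) (scalars act trivially on vertices,
  so GL2(A) has the same orbits).\<close>
definition orb :: "nat \<Rightarrow> ('b::field fls \<times> 'b fls) set set \<Rightarrow> ('b fls \<times> 'b fls) set set set" where
  "orb q V = {vact \<gamma> V | \<gamma>. \<gamma> \<in> GL2 (Apoly q)}"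

definition vtx :: "nat \<Rightarrow> nat \<Rightarrow> ('b::field fls \<times> 'b fls) set set set" where
  "vtx q n = orb q (homcls q ((\<lambda>(x,y). (TT ^ n * x, y)) ` (Oinf q \<times> Oinf q)))"

definition lambda_bar :: "nat \<Rightarrow> 'b::field \<Rightarrow> 'b fls \<Rightarrow> ('b fls \<times> 'b fls) set set set" where
  "lambda_bar q i z =
     (let g = (SOME g. g \<in> GL2 (kinf q) \<and> mob g (fls_const i) = z)
      in orb q (vact g (homcls q (Oinf q \<times> Oinf q))))"

end

(*
  Write z = A + B i with A, B in k_infinity. Then |z|_i = |B| and |z| = max(|A|, |B|), so the
  hypotheses say |A| <= |B| = q^m for some m >= 0. Every g in GL_2(k_infinity) with g i = z
  factors as [[B, A], [0, 1]] k with k = [[d, i^2 c], [c, d]] in the stabiliser of i; k maps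
  O_infinity^2 onto a homothetic copy of itself, and [[B, A], [0, 1]] maps O_infinity^2 onto
  T^m O_infinity + O_infinity, so lambda-bar(z) = v_m. Finally v_n = v_m forces n = m:
  conjugating by diag(T^m, 1) and diag(T^n, 1) turns a scalar multiple of an element of GL_2(A)
  into an automorphism of O_infinity^2, and the valuations of its entries and of its
  determinant force n = m.
*)
theory Submission
  imports Defs "HOL-Algebra.Sylow" "HOL-Algebra.Multiplicative_Group"
begin

unbundle fps_syntax

section \<open>Finite fields\<close>

lemma prime_CHAR_finite_field: "prime CHAR('a::{field,finite})"
  by (rule prime_CHAR_semidom[OF finite_imp_CHAR_pos[OF finite_UNIV]])

lemma finite_field_power_card:
  fixes x :: "'a::{field,finite}"
  shows "x ^ card (UNIV :: 'a set) = x"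
proof (cases "x = 0")
  case False
  define G :: "'a monoid" where "G = \<lparr>carrier = UNIV - {0::'a}, mult = (*), one = 1\<rparr>"
  have "group G"
    by (rule groupI) (auto simp: G_def mult.assoc intro!: bexI[of _ "inverse _"])
  then interpret G: group G .
  have pow: "y [^]\<^bsub>G\<^esub> n = y ^ n" for y and n :: nat
    by (induction n) (simp_all add: G_def mult.commute)
  have "x ^ order G = 1"
    using G.pow_order_eq_1[of x] False unfolding pow by (simp add: G_def)
  moreover have "order G = card (UNIV :: 'a set) - 1"
    by (simp add: order_def G_def card_Diff_singleton)
  ultimately show ?thesis
    by (metis power_eq_if mult.right_neutral finite_UNIV_card_ge_0 finite not_gr0)
qed (simp add: finite_UNIV_card_ge_0)

lemma prime_dvd_card_imp_eq_CHAR: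
  assumes "prime r" and "r dvd card (UNIV :: 'a::{field,finite} set)"
  shows "r = CHAR('a)"
proof -
  define G :: "'a monoid" where "G = \<lparr>carrier = UNIV :: 'a set, mult = (+), one = 0\<rparr>"
  have G: "group G"
    by (rule groupI) (auto simp: G_def add.assoc intro!: exI[of _ "- _"])
  obtain m where "order G = r ^ 1 * m"
    using assms(2) by (auto simp: order_def G_def)
  from sylow_thm[OF assms(1) G this] obtain H where H: "subgroup H G" "card H = r"
    by auto
  then interpret H: group "G\<lparr>carrier := H\<rparr>"
    using G by (simp add: subgroup.subgroup_is_group)
  have "\<not> H \<subseteq> {0}"
    using H(2) prime_gt_1_nat[OF assms(1)] card_mono[of "{0::'a}" H] by auto
  then obtain x where x: "x \<in> H" "x \<noteq> 0"
    by auto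
  have pow: "y [^]\<^bsub>G\<lparr>carrier := H\<rparr>\<^esub> n = of_nat n * y" for y and n :: nat
    by (induction n) (simp_all add: G_def distrib_right)
  have "of_nat r * x = 0"
    using H.pow_order_eq_1[of x] x unfolding pow by (simp add: order_def H(2) G_def)
  then have "CHAR('a) dvd r"
    using x(2) by (simp add: of_nat_eq_0_iff_char_dvd)
  then show ?thesis
    using assms(1) prime_CHAR_finite_field by (metis primes_dvd_imp_eq)
qed

lemma card_eq_CHAR_power: "\<exists>k. card (UNIV :: 'a::{field,finite} set) = CHAR('a) ^ k"
proof (rule ccontr)
  assume "\<nexists>k. card (UNIV :: 'a set) = CHAR('a) ^ k"
  then obtain r where "r \<in> prime_factors (card (UNIV :: 'a set))" "r \<noteq> CHAR('a)"
    using Ex_other_prime_factor[of "card (UNIV :: 'a set)" "CHAR('a)"] prime_CHAR_finite_field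
    by auto
  then show False
    using prime_dvd_card_imp_eq_CHAR by auto
qed

section \<open>The valuation of a Laurent series\<close>

definition val_ge :: "'a::zero fls \<Rightarrow> int \<Rightarrow> bool" where
  "val_ge f k \<longleftrightarrow> (\<forall>n<k. f $$ n = 0)"

lemma val_ge_iff: "val_ge f k \<longleftrightarrow> f = 0 \<or> k \<le> fls_subdegree f"
  by (auto simp: val_ge_def) (metis not_le nth_fls_subdegree_nonzero)

lemma val_ge_subdegree [simp]: "val_ge f (fls_subdegree f)"
  by (simp add: val_ge_iff)

lemma val_ge_const [simp]: "val_ge (fls_const c) 0"
  by (simp add: val_ge_def)

lemma val_ge_add: "val_ge f k \<Longrightarrow> val_ge g k \<Longrightarrow> val_ge (f + g) k"
  by (simp add: val_ge_def)

lemma val_ge_diff: "val_ge f k \<Longrightarrow> val_ge g k \<Longrightarrow> val_ge (f - g :: 'a::ab_group_add fls) k"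
  by (simp add: val_ge_def)

lemma val_ge_uminus [simp]: "val_ge (- f :: 'a::ab_group_add fls) k \<longleftrightarrow> val_ge f k"
  by (simp add: val_ge_def)

lemma val_ge_mult:
  "val_ge f k \<Longrightarrow> val_ge g l \<Longrightarrow> m \<le> k + l \<Longrightarrow> val_ge (f * g :: 'a::idom fls) m"
  by (cases "f = 0"; cases "g = 0") (auto simp: val_ge_iff)

lemma val_ge_divide:
  "val_ge f k \<Longrightarrow> g \<noteq> 0 \<Longrightarrow> m \<le> k - fls_subdegree g \<Longrightarrow> val_ge (f / g :: 'a::field fls) m"
  by (cases "f = 0") (auto simp: val_ge_iff fls_divide_subdegree)

lemma val_ge_shift [simp]: "val_ge (fls_shift m f) k \<longleftrightarrow> val_ge f (k + m)"
  unfolding val_ge_def fls_shift_nth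
proof (intro iffI allI impI)
  fix n
  assume "\<forall>n<k. f $$ (n + m) = 0" and "n < k + m"
  then show "f $$ n = 0"
    by (drule_tac spec[of _ "n - m"]) simp
qed simp

section \<open>Matrices, lattices and homothety classes\<close>

fun mat2_mult :: "'f::comm_ring mat2 \<Rightarrow> 'f mat2 \<Rightarrow> 'f mat2" where
  "mat2_mult (a, b, c, d) (a', b', c', d') =
     (a * a' + b * c', a * b' + b * d', c * a' + d * c', c * b' + d * d')"

lemma matvec_mat2_mult: "matvec (mat2_mult M N) v = matvec M (matvec N v)"
  by (cases M; cases N; cases v) (simp add: algebra_simps)

lemma det2_mat2_mult: "det2 (mat2_mult M N) = det2 M * det2 N"
  by (cases M; cases N) (simp add: algebra_simps)

lemma image_matvec_mat2_mult: "matvec (mat2_mult M N) ` S = matvec M ` matvec N ` S"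
  by (simp add: image_image matvec_mat2_mult)

lemma matvec_one [simp]: "matvec (1, 0, 0, 1) v = (v :: 'a::comm_ring_1 \<times> 'a)"
  by (cases v) simp

lemma homcls_eq: "homcls q L = {matvec (c, 0, 0, c) ` L | c. c \<in> kinf q \<and> c \<noteq> 0}"
proof -
  have "(\<lambda>(x, y). (c * x, c * y)) = matvec (c, 0, 0, c)" for c :: "'a::field fls"
    by auto
  then show ?thesis
    by (simp add: homcls_def)
qed

lemma vact_homcls: "vact g (homcls q L) = homcls q (matvec g ` L)"
proof -
  have "matvec g \<circ> matvec (c, 0, 0, c) = matvec (c, 0, 0, c) \<circ> matvec g" for c
  proof
    fix v :: "'a fls \<times> 'a fls"
    show "(matvec g \<circ> matvec (c, 0, 0, c)) v = (matvec (c, 0, 0, c) \<circ> matvec g) v"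
      by (cases g; cases v) (simp add: algebra_simps)
  qed
  then have "matvec g ` matvec (c, 0, 0, c) ` L = matvec (c, 0, 0, c) ` matvec g ` L" for c
    by (metis image_comp)
  then show ?thesis
    unfolding vact_def homcls_eq by blast
qed

lemma kinf_shift: "f \<in> kinf q \<Longrightarrow> fls_shift k f \<in> kinf q"
  by (simp add: kinf_def)

text \<open>The lattice \<open>T^-a O\<^sub>\<infinity> \<oplus> T^-b O\<^sub>\<infinity>\<close>.\<close>
definition diag_lattice :: "nat \<Rightarrow> int \<Rightarrow> int \<Rightarrow> ('b::field fls \<times> 'b fls) set" where
  "diag_lattice q a b = {(u, w). u \<in> kinf q \<and> val_ge u a \<and> w \<in> kinf q \<and> val_ge w b}"

lemma Oinf_times_Oinf: "Oinf q \<times> Oinf q = diag_lattice q 0 0"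
  by (auto simp: Oinf_def diag_lattice_def val_ge_def)

lemma vertex_lattice:
  "(\<lambda>(x, y). (TT ^ n * x, y)) ` (Oinf q \<times> Oinf q) = diag_lattice q (- int n) 0"
proof (intro equalityI subsetI)
  fix v
  assume "v \<in> diag_lattice q (- int n) 0"
  then obtain u w where "v = (u, w)" "(fls_shift (- int n) u, w) \<in> diag_lattice q 0 0"
    by (auto simp: diag_lattice_def kinf_shift)
  then show "v \<in> (\<lambda>(x, y). (TT ^ n * x, y)) ` (Oinf q \<times> Oinf q)"
    unfolding Oinf_times_Oinf by (auto simp: fls_X_inv_power_times_conv_shift intro!: image_eqI)
qed (auto simp: Oinf_times_Oinf diag_lattice_def fls_X_inv_power_times_conv_shift kinf_shift)

section \<open>The quadratic extension \<open>k\<^sub>\<infinity>(i)\<close>\<close>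

definition fls_frob :: "nat \<Rightarrow> 'a::comm_ring_1 fls \<Rightarrow> 'a fls" where
  "fls_frob q f = Abs_fls (\<lambda>n. (f $$ n) ^ q)"

locale Fq2 =
  fixes q :: nat and i :: "'b::{field,finite}"
  assumes card_UNIV: "card (UNIV :: 'b set) = q ^ 2"
    and odd_q: "odd q"
    and i_square_in_Fq: "i ^ 2 \<in> Fq q"
    and i_notin_Fq: "i \<notin> Fq q"
begin

lemma q_gt_1: "q > 1"
proof -
  have "2 \<le> card (UNIV :: 'b set)"
    using card_mono[of UNIV "{0, 1 :: 'b}"] by simp
  then have "q \<noteq> 1"
    using card_UNIV by auto
  then show ?thesis
    using odd_q by (cases q) auto
qed

lemma q_CHAR_power: "\<exists>j. q = CHAR('b) ^ j"
proof -
  obtain k where "q * q = CHAR('b) ^ k"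
    using card_eq_CHAR_power[where 'a = 'b] card_UNIV by (auto simp: power2_eq_square)
  then show ?thesis
    using prime_power_mult_nat[OF prime_CHAR_finite_field] by blast
qed

lemma frobenius_add: "(x + y) ^ q = x ^ q + y ^ q" for x y :: 'b
  using q_CHAR_power freshmans_dream'[OF prime_CHAR_finite_field] by blast

lemma frobenius_sum: "sum f A ^ q = (\<Sum>j\<in>A. f j ^ q)" for f :: "'c \<Rightarrow> 'b"
  using q_CHAR_power freshmans_dream_sum'[OF prime_CHAR_finite_field] by blast

lemma frobenius_uminus: "(- x) ^ q = - (x ^ q)" for x :: 'b
  using odd_q by (simp add: power_minus_odd)

lemma frobenius_diff: "(x - y) ^ q = x ^ q - y ^ q" for x y :: 'b
  using frobenius_add[of x "- y"] by (simp add: frobenius_uminus)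

lemma frobenius_involution: "(x ^ q) ^ q = x" for x :: 'b
  using finite_field_power_card[of x] card_UNIV by (simp add: power2_eq_square power_mult)

lemma Fq_divide: "a \<in> Fq q \<Longrightarrow> b \<in> Fq q \<Longrightarrow> a / b \<in> Fq q" for a b :: 'b
  by (simp add: Fq_def power_divide)

lemma i_nonzero: "i \<noteq> 0"
  using i_notin_Fq q_gt_1 by (auto simp: Fq_def)

lemma two_nonzero: "(2 :: 'b) \<noteq> 0"
proof
  assume "(2 :: 'b) = 0"
  then have "CHAR('b) dvd 2"
    by (metis of_nat_eq_0_iff_char_dvd of_nat_numeral)
  then have "CHAR('b) = 2"
    using prime_CHAR_finite_field by (metis primes_dvd_imp_eq two_is_prime_nat)
  then obtain j where j: "q = 2 ^ j"
    using q_CHAR_power by auto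
  with odd_q have "j = 0"
    by (cases j) auto
  with j q_gt_1 show False
    by simp
qed

lemma i_power_q: "i ^ q = - i"
proof -
  have "(i ^ q) ^ 2 = i ^ 2"
    using i_square_in_Fq by (simp add: Fq_def flip: power_mult) (simp add: mult.commute)
  then have "(i ^ q - i) * (i ^ q + i) = 0"
    by (simp add: algebra_simps power2_eq_square)
  moreover have "i ^ q \<noteq> i"
    using i_notin_Fq by (simp add: Fq_def)
  ultimately show ?thesis
    by (simp add: eq_neg_iff_add_eq_0)
qed

lemma Fq_decomp:
  fixes x :: 'b
  shows "(x + x ^ q) / 2 \<in> Fq q" and "(x - x ^ q) / (2 * i) \<in> Fq q"
    and "x = (x + x ^ q) / 2 + (x - x ^ q) / (2 * i) * i"
proof -
  have two: "(2 :: 'b) ^ q = 2"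
    using frobenius_add[of 1 1] by simp
  show "(x + x ^ q) / 2 \<in> Fq q"
    by (simp add: Fq_def power_divide frobenius_add frobenius_involution two add.commute)
  have "((x - x ^ q) / (2 * i)) ^ q = (x ^ q - x) / (2 * - i)"
    by (simp add: power_divide frobenius_diff frobenius_involution two power_mult_distrib i_power_q)
  then show "(x - x ^ q) / (2 * i) \<in> Fq q"
    by (simp add: Fq_def minus_divide_left)
  have "(x - x ^ q) / (2 * i) * i = (x - x ^ q) / 2"
    using i_nonzero by simp
  then show "x = (x + x ^ q) / 2 + (x - x ^ q) / (2 * i) * i"
    using two_nonzero by (simp add: field_simps)
qed

lemma Fq_independent:
  fixes a b :: 'b
  assumes "a \<in> Fq q" and "b \<in> Fq q" and "a + b * i = 0"
  shows "a = 0 \<and> b = 0"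
proof (cases "b = 0")
  case False
  then have "i = - a / b"
    using assms(3) by (simp add: field_simps eq_neg_iff_add_eq_0)
  moreover have "- a \<in> Fq q"
    using assms(1) by (simp add: Fq_def frobenius_uminus)
  ultimately show ?thesis
    using i_notin_Fq Fq_divide[OF _ assms(2)] by metis
qed (use assms in simp)

lemma fls_frob_nth [simp]: "fls_frob q f $$ n = (f $$ n) ^ q"
  unfolding fls_frob_def using q_gt_1
  by (intro nth_Abs_fls eventually_mono[OF MOST_fls_neg_nth_eq_0[of f]]) (simp add: power_0_left)

lemma fls_frob_eq_0_iff [simp]: "fls_frob q f = 0 \<longleftrightarrow> f = 0" for f :: "'b fls"
  using q_gt_1 by (auto simp: fls_eq_iff)

lemma fls_frob_0 [simp]: "fls_frob q 0 = (0 :: 'b fls)"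
  by simp

lemma fls_frob_subdegree [simp]: "fls_subdegree (fls_frob q f) = fls_subdegree f" for f :: "'b fls"
  using q_gt_1 by (cases "f = 0") (auto intro: fls_subdegree_eqI)

lemma fls_frob_add: "fls_frob q (f + g) = fls_frob q f + fls_frob q g" for f g :: "'b fls"
  by (rule fls_eqI) (simp add: frobenius_add)

lemma fls_frob_diff: "fls_frob q (f - g) = fls_frob q f - fls_frob q g" for f g :: "'b fls"
  by (rule fls_eqI) (simp add: frobenius_diff)

lemma fls_frob_const: "fls_frob q (fls_const c) = fls_const (c ^ q)" for c :: 'b
  using q_gt_1 by (intro fls_eqI) simp

lemma fls_frob_mult: "fls_frob q (f * g) = fls_frob q f * fls_frob q g" for f g :: "'b fls"
  by (rule fls_eqI) (simp add: fls_times_nth(2) frobenius_sum power_mult_distrib)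

lemma fls_frob_inverse: "fls_frob q (inverse f) = inverse (fls_frob q f)" for f :: "'b fls"
proof (cases "f = 0")
  case False
  then have "fls_frob q f * fls_frob q (inverse f) = 1"
    using fls_frob_const[of 1] by (simp flip: fls_frob_mult)
  then show ?thesis
    by (metis inverse_unique)
qed simp

lemma kinf_iff_fls_frob: "f \<in> kinf q \<longleftrightarrow> fls_frob q f = f" for f :: "'b fls"
  by (auto simp: kinf_def Fq_def fls_eq_iff)

lemma kinf_const: "c \<in> Fq q \<Longrightarrow> fls_const c \<in> kinf q" for c :: 'b
  by (simp add: kinf_iff_fls_frob fls_frob_const Fq_def)

lemma kinf_0 [simp]: "(0 :: 'b fls) \<in> kinf q" and kinf_1 [simp]: "(1 :: 'b fls) \<in> kinf q"
  using kinf_const[of 0] kinf_const[of 1] q_gt_1 by (simp_all add: Fq_def)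

lemma kinf_add: "f \<in> kinf q \<Longrightarrow> g \<in> kinf q \<Longrightarrow> f + g \<in> kinf q" for f g :: "'b fls"
  by (simp add: kinf_iff_fls_frob fls_frob_add)

lemma kinf_diff: "f \<in> kinf q \<Longrightarrow> g \<in> kinf q \<Longrightarrow> f - g \<in> kinf q" for f g :: "'b fls"
  by (simp add: kinf_iff_fls_frob fls_frob_diff)

lemma kinf_uminus: "f \<in> kinf q \<Longrightarrow> - f \<in> kinf q" for f :: "'b fls"
  using kinf_diff[of 0 f] by simp

lemma kinf_mult: "f \<in> kinf q \<Longrightarrow> g \<in> kinf q \<Longrightarrow> f * g \<in> kinf q" for f g :: "'b fls"
  by (simp add: kinf_iff_fls_frob fls_frob_mult)

lemma kinf_divide: "f \<in> kinf q \<Longrightarrow> g \<in> kinf q \<Longrightarrow> f / g \<in> kinf q" for f g :: "'b fls"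
  by (simp add: kinf_iff_fls_frob fls_frob_mult fls_frob_inverse divide_inverse)

lemmas kinf_field_ops = kinf_add kinf_diff kinf_uminus kinf_mult kinf_divide

definition iota :: "'b fls" where
  "iota = fls_const i"

lemma kinf_iota_square: "iota * iota \<in> kinf q"
  using kinf_const[OF i_square_in_Fq] by (simp add: iota_def power2_eq_square)

lemma kinf_iota_decomp: "\<exists>A B. A \<in> kinf q \<and> B \<in> kinf q \<and> z = A + B * iota"
proof (intro exI conjI)
  show "(z + fls_frob q z) * fls_const (1 / 2) \<in> kinf q"
    using Fq_decomp(1) by (simp add: kinf_def)
  show "(z - fls_frob q z) * fls_const (1 / (2 * i)) \<in> kinf q"
    using Fq_decomp(2) by (simp add: kinf_def)
  show "z = (z + fls_frob q z) * fls_const (1 / 2) + (z - fls_frob q z) * fls_const (1 / (2 * i)) * iota"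
    using Fq_decomp(3) by (intro fls_eqI) (simp add: iota_def)
qed

lemma kinf_iota_nth_eq_0_iff:
  assumes "A \<in> kinf q" and "B \<in> kinf q"
  shows "(A + B * iota) $$ n = 0 \<longleftrightarrow> A $$ n = 0 \<and> B $$ n = 0"
  using Fq_independent[of "A $$ n" "B $$ n"] assms by (auto simp: kinf_def iota_def)

lemma kinf_iota_eq_0_iff:
  "A \<in> kinf q \<Longrightarrow> B \<in> kinf q \<Longrightarrow> A + B * iota = 0 \<longleftrightarrow> A = 0 \<and> B = 0"
  using kinf_iota_nth_eq_0_iff by (auto simp: fls_eq_iff)

lemma val_ge_kinf_iota:
  "A \<in> kinf q \<Longrightarrow> B \<in> kinf q \<Longrightarrow> val_ge (A + B * iota) k \<longleftrightarrow> val_ge A k \<and> val_ge B k"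
  using kinf_iota_nth_eq_0_iff by (auto simp: val_ge_def)

lemma fls_frob_kinf_iota:
  "A \<in> kinf q \<Longrightarrow> B \<in> kinf q \<Longrightarrow> fls_frob q (A + B * iota) = A - B * iota"
  by (simp add: kinf_iff_fls_frob fls_frob_add fls_frob_mult iota_def fls_frob_const i_power_q)

end

section \<open>The vertex attached to a point\<close>

context Fq2
begin

lemma homcls_scale:
  fixes c :: "'b fls"
  assumes "c \<in> kinf q" and "c \<noteq> 0"
  shows "homcls q (matvec (c, 0, 0, c) ` L) = homcls q L"
proof -
  have comp: "matvec (c', 0, 0, c') ` matvec (c, 0, 0, c) ` L = matvec (c' * c, 0, 0, c' * c) ` L"
    for c' :: "'b fls"
    using matvec_mat2_mult[of "(c', 0, 0, c')" "(c, 0, 0, c)"] by (simp add: image_image)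
  show ?thesis
  proof (intro equalityI subsetI)
    fix X
    assume "X \<in> homcls q (matvec (c, 0, 0, c) ` L)"
    then obtain c' where "c' \<in> kinf q" "c' \<noteq> 0" "X = matvec (c' * c, 0, 0, c' * c) ` L"
      by (auto simp: homcls_eq comp)
    then show "X \<in> homcls q L"
      using assms by (auto simp: homcls_eq intro!: kinf_mult)
  next
    fix X
    assume "X \<in> homcls q L"
    then obtain c' where c': "c' \<in> kinf q" "c' \<noteq> 0" "X = matvec (c', 0, 0, c') ` L"
      by (auto simp: homcls_eq)
    then have "X = matvec (c' / c, 0, 0, c' / c) ` matvec (c, 0, 0, c) ` L"
      using assms(2) by (simp add: comp)
    then show "X \<in> homcls q (matvec (c, 0, 0, c) ` L)"
      using assms c' by (auto simp: homcls_eq intro!: exI[of _ "c' / c"] kinf_divide)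
  qed
qed

lemma homcls_diag_lattice_shift:
  "homcls q (diag_lattice q (a + k) (b + k)) = homcls q (diag_lattice q a b :: ('b fls \<times> 'b fls) set)"
proof -
  define c :: "'b fls" where "c = fls_shift (- k) 1"
  have c_mult: "c * f = fls_shift (- k) f" for f
    by (simp add: c_def fls_shifted_times_simps)
  have "matvec (c, 0, 0, c) ` diag_lattice q a b = diag_lattice q (a + k) (b + k)"
  proof (intro equalityI subsetI)
    fix v :: "'b fls \<times> 'b fls"
    assume "v \<in> diag_lattice q (a + k) (b + k)"
    then obtain u w where "v = (u, w)" "(fls_shift k u, fls_shift k w) \<in> diag_lattice q a b"
      by (auto simp: diag_lattice_def kinf_shift)
    then show "v \<in> matvec (c, 0, 0, c) ` diag_lattice q a b"
      by (auto simp: c_mult intro!: image_eqI)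
  qed (auto simp: diag_lattice_def c_mult kinf_shift)
  moreover have "c \<in> kinf q" "c \<noteq> 0"
    by (simp_all add: c_def kinf_shift fls_shift_eq0_iff)
  ultimately show ?thesis
    using homcls_scale by metis
qed

lemma stabilizer_image_diag_lattice:
  assumes ga: "ga \<in> kinf q" and de: "de \<in> kinf q" and nz: "de + ga * iota \<noteq> 0"
  defines "\<mu> \<equiv> fls_subdegree (de + ga * iota)"
  shows "matvec (de, iota * iota * ga, ga, de) ` diag_lattice q 0 0 = diag_lattice q \<mu> \<mu>"
proof -
  define J where "J = iota * iota"
  have J: "J \<in> kinf q"
    using kinf_iota_square by (simp add: J_def)
  have v: "val_ge ga \<mu>" "val_ge de \<mu>" "val_ge (J * ga) \<mu>"
    using val_ge_kinf_iota[OF de ga, of \<mu>] val_ge_mult[of J 0 ga \<mu> \<mu>]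
    by (simp_all add: \<mu>_def J_def iota_def)
  \<comment> \<open>the norm of \<open>de + ga i\<close>, which is the determinant\<close>
  define N where "N = (de + ga * iota) * fls_frob q (de + ga * iota)"
  have N: "N \<noteq> 0" "fls_subdegree N = 2 * \<mu>"
    using nz by (simp_all add: N_def \<mu>_def)
  have N_eq: "N = de * de - J * ga * ga"
    unfolding N_def J_def fls_frob_kinf_iota[OF de ga] by (simp add: algebra_simps)
  have adj: "mat2_mult (de, J * ga, ga, de) (de, - (J * ga), - ga, de) = (N, 0, 0, N)"
    by (simp add: N_eq algebra_simps)
  show ?thesis
    unfolding J_def[symmetric]
  proof (intro equalityI subsetI)
    fix v :: "'b fls \<times> 'b fls"
    assume "v \<in> matvec (de, J * ga, ga, de) ` diag_lattice q 0 0"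
    then obtain x y where xy: "v = matvec (de, J * ga, ga, de) (x, y)"
      "x \<in> kinf q" "val_ge x 0" "y \<in> kinf q" "val_ge y 0"
      by (auto simp: diag_lattice_def)
    have "val_ge (de * x + J * ga * y) \<mu>" "val_ge (ga * x + de * y) \<mu>"
      by (intro val_ge_add val_ge_mult[OF v(2) xy(3)] val_ge_mult[OF v(3) xy(5)]
          val_ge_mult[OF v(1) xy(3)] val_ge_mult[OF v(2) xy(5)]; simp)+
    then show "v \<in> diag_lattice q \<mu> \<mu>"
      using xy J ga de by (simp add: diag_lattice_def kinf_field_ops)
  next
    fix v :: "'b fls \<times> 'b fls"
    assume "v \<in> diag_lattice q \<mu> \<mu>"
    then obtain u w where uw: "v = (u, w)" "u \<in> kinf q" "val_ge u \<mu>" "w \<in> kinf q" "val_ge w \<mu>"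
      by (auto simp: diag_lattice_def)
    have uw_N: "val_ge (u / N) (- \<mu>)" "val_ge (w / N) (- \<mu>)"
      by (intro val_ge_divide[OF uw(3) N(1)] val_ge_divide[OF uw(5) N(1)]; simp add: N(2))+
    have "val_ge (de * (u / N) - J * ga * (w / N)) 0" "val_ge (- ga * (u / N) + de * (w / N)) 0"
      by (intro val_ge_add val_ge_diff val_ge_mult[OF v(2) uw_N(1)] val_ge_mult[OF v(3) uw_N(2)]
          val_ge_mult[OF v(2) uw_N(2)] val_ge_mult[of "- ga" \<mu>, OF _ uw_N(1)]; simp add: v)+
    moreover have "N \<in> kinf q"
      using J ga de by (simp add: N_eq kinf_field_ops)
    ultimately have "matvec (de, - (J * ga), - ga, de) (u / N, w / N) \<in> diag_lattice q 0 0"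
      using uw J ga de by (simp add: diag_lattice_def kinf_field_ops)
    moreover have "matvec (de, J * ga, ga, de) (matvec (de, - (J * ga), - ga, de) (u / N, w / N))
        = matvec (N, 0, 0, N) (u / N, w / N)"
      by (simp only: adj flip: matvec_mat2_mult)
    then have "v = matvec (de, J * ga, ga, de) (matvec (de, - (J * ga), - ga, de) (u / N, w / N))"
      using uw(1) N(1) by simp
    ultimately show "v \<in> matvec (de, J * ga, ga, de) ` diag_lattice q 0 0"
      by blast
  qed
qed

lemma upper_triangular_image_diag_lattice:
  fixes A B :: "'b fls"
  assumes A: "A \<in> kinf q" and B: "B \<in> kinf q" "B \<noteq> 0" and vA: "val_ge A (fls_subdegree B)"
  shows "matvec (B, A, 0, 1) ` diag_lattice q k k = diag_lattice q (fls_subdegree B + k) k"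
proof (intro equalityI image_subsetI subsetI)
  fix p :: "'b fls \<times> 'b fls"
  assume "p \<in> diag_lattice q k k"
  then obtain x y where xy: "p = (x, y)" "x \<in> kinf q" "val_ge x k" "y \<in> kinf q" "val_ge y k"
    by (cases p) (auto simp: diag_lattice_def)
  have "val_ge (B * x + A * y) (fls_subdegree B + k)"
    by (intro val_ge_add val_ge_mult[OF val_ge_subdegree xy(3)] val_ge_mult[OF vA xy(5)]; simp)
  then show "matvec (B, A, 0, 1) p \<in> diag_lattice q (fls_subdegree B + k) k"
    using xy A B by (simp add: diag_lattice_def kinf_field_ops)
next
  fix v :: "'b fls \<times> 'b fls"
  assume "v \<in> diag_lattice q (fls_subdegree B + k) k"
  then obtain u w where uw: "v = (u, w)"
    "u \<in> kinf q" "val_ge u (fls_subdegree B + k)" "w \<in> kinf q" "val_ge w k"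
    by (auto simp: diag_lattice_def)
  have "val_ge (u - A * w) (fls_subdegree B + k)"
    by (intro val_ge_diff uw(3) val_ge_mult[OF vA uw(5)]; simp)
  then have "val_ge ((u - A * w) / B) k"
    by (rule val_ge_divide) (simp_all add: B)
  then have "((u - A * w) / B, w) \<in> diag_lattice q k k"
    using uw A B by (simp add: diag_lattice_def kinf_field_ops)
  moreover have "v = matvec (B, A, 0, 1) ((u - A * w) / B, w)"
    using uw(1) B(2) by simp
  ultimately show "v \<in> matvec (B, A, 0, 1) ` diag_lattice q k k"
    by blast
qed

lemma GL2_mob_iota_factor:
  assumes g: "g \<in> GL2 (kinf q)" and mob: "mob g iota = A + B * iota"
    and A: "A \<in> kinf q" and B: "B \<in> kinf q"
  obtains ga de where "ga \<in> kinf q" "de \<in> kinf q" "de + ga * iota \<noteq> 0"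
    and "g = mat2_mult (B, A, 0, 1) (de, iota * iota * ga, ga, de)"
proof -
  obtain al be ga de where g_eq: "g = (al, be, ga, de)"
    by (cases g)
  from g obtain e where k: "al \<in> kinf q" "be \<in> kinf q" "ga \<in> kinf q" "de \<in> kinf q"
    and e: "(al * de - be * ga) * e = 1"
    by (auto simp: GL2_def g_eq)
  have den: "de + ga * iota \<noteq> 0"
    using e kinf_iota_eq_0_iff[OF k(4,3)] by auto
  have "al * iota + be = (A + B * iota) * (ga * iota + de)"
    using mob den by (simp add: g_eq divide_eq_eq add.commute)
  then have "(be - (A * de + B * ga * (iota * iota))) + (al - (A * ga + B * de)) * iota = 0"
    by (simp add: algebra_simps)
  moreover have "be - (A * de + B * ga * (iota * iota)) \<in> kinf q" "al - (A * ga + B * de) \<in> kinf q"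
    using k A B kinf_iota_square by (simp_all add: kinf_field_ops)
  ultimately have "be = A * de + B * ga * (iota * iota)" "al = A * ga + B * de"
    using kinf_iota_eq_0_iff by auto
  then show ?thesis
    using that k den by (simp add: g_eq algebra_simps)
qed

lemma lambda_bar_kinf_iota:
  fixes A B :: "'b fls"
  assumes A: "A \<in> kinf q" and B: "B \<in> kinf q" "B \<noteq> 0" and vA: "val_ge A (fls_subdegree B)"
    and m: "fls_subdegree B = - int m"
  shows "lambda_bar q i (A + B * iota) = vtx q m"
proof -
  define g where "g = (SOME g. g \<in> GL2 (kinf q) \<and> mob g (fls_const i) = A + B * iota)"
  have "(B, A, 0, 1) \<in> GL2 (kinf q) \<and> mob (B, A, 0, 1) (fls_const i) = A + B * iota"
    using A B kinf_divide[of 1 B]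
    by (auto simp: GL2_def iota_def add.commute intro!: bexI[of _ "1 / B"])
  then have g: "g \<in> GL2 (kinf q)" "mob g iota = A + B * iota"
    unfolding g_def iota_def by (metis (mono_tags, lifting) someI)+
  obtain ga de where k: "ga \<in> kinf q" "de \<in> kinf q" "de + ga * iota \<noteq> 0"
    and g_eq: "g = mat2_mult (B, A, 0, 1) (de, iota * iota * ga, ga, de)"
    using GL2_mob_iota_factor[OF g A B(1)] by blast
  define \<mu> where "\<mu> = fls_subdegree (de + ga * iota)"
  have "matvec g ` diag_lattice q 0 0
      = matvec (B, A, 0, 1) ` matvec (de, iota * iota * ga, ga, de) ` diag_lattice q 0 0"
    by (simp only: g_eq image_matvec_mat2_mult)
  also have "\<dots> = diag_lattice q (- int m + \<mu>) (0 + \<mu>)"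
    using stabilizer_image_diag_lattice[OF k] upper_triangular_image_diag_lattice[OF A B vA]
    by (simp add: \<mu>_def m)
  finally have "homcls q (matvec g ` diag_lattice q 0 0) = homcls q (diag_lattice q (- int m) 0)"
    by (simp only: homcls_diag_lattice_shift)
  then show ?thesis
    unfolding vtx_def vertex_lattice
    unfolding lambda_bar_def Let_def g_def[symmetric] vact_homcls Oinf_times_Oinf by simp
qed

lemma powi_q_le_iff: "real q powi a \<le> real q powi b \<longleftrightarrow> a \<le> b"
  using q_gt_1 power_int_strict_increasing[of b a "real q"] power_int_increasing[of a b "real q"]
  by (cases "a \<le> b") auto

lemma subdegree_kinf_iota_le:
  assumes "A \<in> kinf q" "B \<in> kinf q" "B \<noteq> 0"
  shows "A + B * iota \<noteq> 0" and "fls_subdegree (A + B * iota) \<le> fls_subdegree B"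
proof -
  show nz: "A + B * iota \<noteq> 0"
    using assms kinf_iota_eq_0_iff by blast
  have "val_ge B (fls_subdegree (A + B * iota))"
    using val_ge_kinf_iota[OF assms(1,2)] val_ge_subdegree by blast
  then show "fls_subdegree (A + B * iota) \<le> fls_subdegree B"
    using assms(3) by (simp add: val_ge_iff)
qed

lemma absi_kinf_iota:
  assumes A: "A \<in> kinf q" and B: "B \<in> kinf q" "B \<noteq> 0"
  shows "absi q (A + B * iota) = real q powi (- fls_subdegree B)"
  unfolding absi_def
proof (rule cInf_eq_minimum)
  show "real q powi (- fls_subdegree B) \<in> (\<lambda>w. absv q (A + B * iota - w)) ` kinf q"
    using A B i_nonzero by (auto simp: absv_def iota_def image_iff intro!: bexI[of _ A])
next
  fix x
  assume "x \<in> (\<lambda>w. absv q (A + B * iota - w)) ` kinf q"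
  then obtain w where w: "w \<in> kinf q" "x = absv q ((A - w) + B * iota)"
    by (auto simp: algebra_simps)
  have "A - w \<in> kinf q"
    using A w(1) by (rule kinf_diff)
  from subdegree_kinf_iota_le[OF this B] w(2)
  show "real q powi (- fls_subdegree B) \<le> x"
    by (simp add: absv_def powi_q_le_iff)
qed

lemma lambda_bar_eq_vtx:
  assumes z: "z \<notin> kinf q" and eq: "absv q z = absi q z" and ge: "absi q z \<ge> 1"
  shows "\<exists>m. lambda_bar q i z = vtx q m \<and> absv q z = real q ^ m"
proof -
  obtain A B where A: "A \<in> kinf q" and B: "B \<in> kinf q" and z_eq: "z = A + B * iota"
    using kinf_iota_decomp by blast
  have "B \<noteq> 0"
    using z A z_eq by auto
  note z_le = subdegree_kinf_iota_le[OF A B this]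
  note absi = absi_kinf_iota[OF A B \<open>B \<noteq> 0\<close>, folded z_eq]
  have absv: "absv q z = real q powi (- fls_subdegree z)"
    using z_le(1) by (simp add: absv_def z_eq)
  have "real q powi (- fls_subdegree z) = real q powi (- fls_subdegree B)"
    using eq absv absi by simp
  then have sz: "fls_subdegree z = fls_subdegree B"
    using powi_q_le_iff by (metis order.antisym order.refl neg_equal_iff_equal)
  then have vA: "val_ge A (fls_subdegree B)"
    using val_ge_kinf_iota[OF A B] val_ge_subdegree[of z] z_eq by simp
  have "0 \<le> - fls_subdegree B"
    using ge powi_q_le_iff[of 0] by (simp add: absi)
  then obtain m where m: "fls_subdegree B = - int m"
    by (metis neg_0_le_iff_le nonpos_int_cases)
  show ?thesis
  proof (intro exI conjI)
    show "lambda_bar q i z = vtx q m"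
      using lambda_bar_kinf_iota[OF A B \<open>B \<noteq> 0\<close> vA m] z_eq by simp
    show "absv q z = real q ^ m"
      using absv sz m by simp
  qed
qed

end

section \<open>Distinctness of the vertices \<open>v\<^sub>n\<close>\<close>

lemma Apoly_subdegree_nonpos: "f \<in> Apoly q \<Longrightarrow> f \<noteq> 0 \<Longrightarrow> fls_subdegree f \<le> 0"
  unfolding Apoly_def by (metis (mono_tags, lifting) mem_Collect_eq not_le nth_fls_subdegree_nonzero)

lemma GL2_Apoly_det:
  assumes "(a, b, c, d) \<in> GL2 (Apoly q)"
  shows "a * d - b * c \<noteq> 0" and "0 \<le> fls_subdegree (a * d - b * c)"
proof -
  obtain e where e: "e \<in> Apoly q" "(a * d - b * c) * e = 1"
    using assms by (auto simp: GL2_def)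
  then show nz: "a * d - b * c \<noteq> 0"
    by auto
  have "e \<noteq> 0"
    using e(2) by auto
  with nz have "fls_subdegree (a * d - b * c) + fls_subdegree e = 0"
    using arg_cong[OF e(2), of fls_subdegree] by simp
  then show "0 \<le> fls_subdegree (a * d - b * c)"
    using Apoly_subdegree_nonpos[OF e(1) \<open>e \<noteq> 0\<close>] by simp
qed

context Fq2
begin

lemma homcls_self: "L \<in> homcls q (L :: ('b fls \<times> 'b fls) set)"
  unfolding homcls_eq by (force intro!: exI[of _ 1])

lemma diag_lattice_vertex:
  "diag_lattice q (- int n) 0 = matvec (TT ^ n, 0, 0, 1) ` (diag_lattice q 0 0 :: ('b fls \<times> 'b fls) set)"
proof -
  have eq: "matvec (TT ^ n, 0, 0, 1) = (\<lambda>(x, y). (TT ^ n * x, y :: 'b fls))"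
    by auto
  show ?thesis
    unfolding eq Oinf_times_Oinf[symmetric] vertex_lattice by (rule refl)
qed

lemma matvec_automorphism_diag_lattice:
  fixes a b c d :: "'b fls"
  assumes M: "matvec (a, b, c, d) ` diag_lattice q 0 0 = diag_lattice q 0 0"
  shows "val_ge a 0" "val_ge b 0" "val_ge c 0" "val_ge d 0"
    and "a * d - b * c \<noteq> 0" "fls_subdegree (a * d - b * c) = 0"
proof -
  have e: "(1, 0) \<in> (diag_lattice q 0 0 :: ('b fls \<times> 'b fls) set)"
    "(0, 1) \<in> (diag_lattice q 0 0 :: ('b fls \<times> 'b fls) set)"
    by (simp_all add: diag_lattice_def val_ge_def)
  then have "matvec (a, b, c, d) (1, 0) \<in> diag_lattice q 0 0"
    "matvec (a, b, c, d) (0, 1) \<in> diag_lattice q 0 0"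
    using M by blast+
  then show entries: "val_ge a 0" "val_ge b 0" "val_ge c 0" "val_ge d 0"
    by (simp_all add: diag_lattice_def)
  have "(1, 0) \<in> matvec (a, b, c, d) ` diag_lattice q 0 0"
    "(0, 1) \<in> matvec (a, b, c, d) ` diag_lattice q 0 0"
    using e by (simp_all only: M)
  then obtain p1 p2 where p: "p1 \<in> diag_lattice q 0 0" "(1, 0) = matvec (a, b, c, d) p1"
    "p2 \<in> diag_lattice q 0 0" "(0, 1) = matvec (a, b, c, d) p2"
    by (elim imageE)
  obtain x1 y1 x2 y2 where xy: "p1 = (x1, y1)" "p2 = (x2, y2)"
    by (cases p1, cases p2)
  have "mat2_mult (a, b, c, d) (x1, x2, y1, y2) = (1, 0, 0, 1)"
    using p(2,4) by (simp add: xy)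
  then have inv: "(a * d - b * c) * (x1 * y2 - x2 * y1) = 1"
    using det2_mat2_mult[of "(a, b, c, d)" "(x1, x2, y1, y2)"] by simp
  then show nz: "a * d - b * c \<noteq> 0"
    by auto
  have "val_ge (a * d - b * c) 0"
    by (intro val_ge_diff val_ge_mult[of a 0 d 0] val_ge_mult[of b 0 c 0]) (simp_all add: entries)
  moreover have "val_ge x1 0" "val_ge y1 0" "val_ge x2 0" "val_ge y2 0"
    using p(1,3) by (simp_all add: xy diag_lattice_def)
  then have "val_ge (x1 * y2 - x2 * y1) 0"
    by (intro val_ge_diff val_ge_mult[of x1 0 y2 0] val_ge_mult[of x2 0 y1 0]) simp_all
  moreover have "x1 * y2 - x2 * y1 \<noteq> 0"
    using inv by auto
  then have "fls_subdegree (a * d - b * c) + fls_subdegree (x1 * y2 - x2 * y1) = 0"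
    using arg_cong[OF inv, of fls_subdegree] nz by simp
  ultimately show "fls_subdegree (a * d - b * c) = 0"
    using inv nz by (auto simp: val_ge_iff)
qed

lemma conjugate_scaled_GL2_automorphism:
  fixes s :: "'b fls"
  assumes L: "matvec (s, 0, 0, s) ` matvec (a, b, c, d) ` diag_lattice q (- int n) 0
      = diag_lattice q (- int m) 0"
  shows "matvec (fls_X ^ m * s * a * TT ^ n, fls_X ^ m * s * b, s * c * TT ^ n, s * d) `
      diag_lattice q 0 0 = diag_lattice q 0 0"
proof -
  have "(fls_X ^ m * s * a * TT ^ n, fls_X ^ m * s * b, s * c * TT ^ n, s * d)
      = mat2_mult (fls_X ^ m, 0, 0, 1) (mat2_mult (mat2_mult (s, 0, 0, s) (a, b, c, d)) (TT ^ n, 0, 0, 1))"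
    by (simp add: algebra_simps)
  then have "matvec (fls_X ^ m * s * a * TT ^ n, fls_X ^ m * s * b, s * c * TT ^ n, s * d) `
      diag_lattice q 0 0 = matvec (fls_X ^ m, 0, 0, 1) ` matvec (s, 0, 0, s) ` matvec (a, b, c, d) `
        matvec (TT ^ n, 0, 0, 1) ` diag_lattice q 0 0"
    by (simp only: image_matvec_mat2_mult)
  also have "\<dots> = matvec (mat2_mult (fls_X ^ m, 0, 0, 1) (TT ^ m, 0, 0, 1)) ` diag_lattice q 0 0"
    by (simp only: L image_matvec_mat2_mult flip: diag_lattice_vertex)
  also have "mat2_mult (fls_X ^ m, 0, 0, 1) (TT ^ m, 0, 0, 1) = (1, 0, 0, (1 :: 'b fls))"
    by (simp add: fls_X_power_times_conv_shift fls_X_inv_power_conv_shift_1)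
  finally show ?thesis
    by simp
qed

lemma scaled_GL2_Apoly_vertex_eq:
  fixes s :: "'b fls"
  assumes g: "(a, b, c, d) \<in> GL2 (Apoly q)" and s: "s \<noteq> 0"
    and L: "matvec (s, 0, 0, s) ` matvec (a, b, c, d) ` diag_lattice q (- int n) 0
      = diag_lattice q (- int m) 0"
  shows "n = m"
proof -
  note M = matvec_automorphism_diag_lattice[OF conjugate_scaled_GL2_automorphism[OF L]]
  have det_eq: "fls_X ^ m * s * a * TT ^ n * (s * d) - fls_X ^ m * s * b * (s * c * TT ^ n)
      = fls_X ^ m * TT ^ n * s * s * (a * d - b * c)"
    by (simp add: algebra_simps)
  note D = GL2_Apoly_det[OF g]
  have val_det: "fls_subdegree (a * d - b * c) + 2 * fls_subdegree s = int n - int m"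
    using M(6) D(1) s by (simp add: det_eq)
  have val_entries:
    "a \<noteq> 0 \<Longrightarrow> 0 \<le> int m + fls_subdegree s + fls_subdegree a - int n"
    "b \<noteq> 0 \<Longrightarrow> 0 \<le> int m + fls_subdegree s + fls_subdegree b"
    "c \<noteq> 0 \<Longrightarrow> 0 \<le> fls_subdegree s + fls_subdegree c - int n"
    "d \<noteq> 0 \<Longrightarrow> 0 \<le> fls_subdegree s + fls_subdegree d"
    using M(1-4) s by (simp_all add: val_ge_iff)
  have "a \<in> Apoly q" "b \<in> Apoly q" "c \<in> Apoly q" "d \<in> Apoly q"
    using g by (auto simp: GL2_def)
  note entries_nonpos = this[THEN Apoly_subdegree_nonpos]
  have "a \<noteq> 0 \<and> d \<noteq> 0 \<or> b \<noteq> 0 \<and> c \<noteq> 0"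
    using D(1) by auto
  then show ?thesis
    using val_det val_entries D(2) entries_nonpos by (elim disjE conjE) simp_all
qed

lemma vtx_injective:
  assumes "(vtx q n :: ('b fls \<times> 'b fls) set set set) = vtx q m"
  shows "n = m"
proof -
  have "(1, 0, 0, 1) \<in> GL2 (Apoly q :: 'b fls set)"
    by (auto simp: GL2_def Apoly_def)
  then have "homcls q (diag_lattice q (- int m) 0) \<in> (vtx q n :: ('b fls \<times> 'b fls) set set set)"
    unfolding assms unfolding vtx_def vertex_lattice orb_def by (force simp: vact_homcls)
  then obtain g :: "'b fls mat2" where g: "g \<in> GL2 (Apoly q)"
    and "homcls q (diag_lattice q (- int m) 0) = homcls q (matvec g ` diag_lattice q (- int n) 0)"
    unfolding vtx_def vertex_lattice orb_def by (auto simp: vact_homcls)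
  then obtain s where "s \<in> kinf q" "s \<noteq> 0"
    and "diag_lattice q (- int m) 0 = matvec (s, 0, 0, s) ` matvec g ` diag_lattice q (- int n) 0"
    using homcls_self[of "diag_lattice q (- int m) 0"] by (auto simp: homcls_eq)
  then show ?thesis
    using scaled_GL2_Apoly_vertex_eq g by (cases g) metis
qed

end

theorem lemma4p2:
  fixes q :: nat and i :: "'b::{field,finite}" and z :: "'b fls" and n :: nat
  assumes "card (UNIV :: 'b set) = q ^ 2" and "odd q"
    and "i ^ 2 \<in> Fq q" and "i ^ 2 \<noteq> 0" and "\<forall>y\<in>Fq q. y ^ 2 \<noteq> i ^ 2"
    and "z \<notin> kinf q"
    and "absv q z = absi q z" and "absi q z \<ge> 1"
  shows "lambda_bar q i z = vtx q n \<longleftrightarrow> real n = log (real q) (absv q z)"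
proof -
  interpret Fq2 q i
    using assms(1-5) by unfold_locales auto
  obtain m where m: "lambda_bar q i z = vtx q m" and abs_z: "absv q z = real q ^ m"
    using lambda_bar_eq_vtx[OF assms(6-8)] by blast
  have "log (real q) (absv q z) = real m"
    using abs_z q_gt_1 by simp
  then show ?thesis
    using m vtx_injective by auto
qed

end
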